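(* Let $L=\mathbb{Z}[d^{\pm 1}, n^{\pm 1}, s^{\pm 1}]$ be the Laurent polynomial ring in three variables, and let $X$ be any $L$-module. Define binary operations on $X$ by \[x\ast y=(-dsn^2)x+ny\quad\text{and}\quad x\cdot y=dx+sy .\] Then $(X,\ast,\cdot)$ is a biquasile. Such a biquasile is called an Alexander (or linear) biquasile.
   Context: A biquasile is a set $X$ with binary operations $\ast,\cdot,\backslash^{\ast},/^{\ast},\backslash,/ : X\times X\to X$ satisfying the following two groups of conditions. First, $\ast$ and $\cdot$ are quasigroup operations with the given left and right inverse operations: for all $x,y\in X$, \[y\backslash^{\ast}(y\ast x)=x=(x\ast y)/^{\ast}y,\qquad y\backslash(y\cdot x)=x=(x\cdot y)/y.\] Second, for all $a,b,x,y\in X$, \[a\ast(x\cdot [y\ast(a\cdot b)]) = (a\ast[x\cdot y])\ast(x\cdot [y\ast([a\ast(x\cdot y)]\cdot b)])\] and \[y\ast([a\ast (x\cdot y)]\cdot b) = (y\ast[a\cdot b])\ast([a\ast (x\cdot [y\ast(a\cdot b)])]\cdot b).\] The claim asserts that inverse operations $\backslash^{\ast},/^{\ast},\backslash,/$ exist making $X$ satisfy all of these conditions with the given $\ast$ and $\cdot$. *)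

theory Defs
  imports Main
begin

definition biquasile :: "('a \<Rightarrow> 'a \<Rightarrow> 'a) \<Rightarrow> ('a \<Rightarrow> 'a \<Rightarrow> 'a) \<Rightarrow> bool" where
  "biquasile star dot \<longleftrightarrow>
    (\<exists>lstar rstar ldot rdot :: 'a \<Rightarrow> 'a \<Rightarrow> 'a.
       (\<forall>x y. lstar y (star y x) = x \<and> rstar (star x y) y = x \<and>
              ldot y (dot y x) = x \<and> rdot (dot x y) y = x) \<and>
       (\<forall>a b x y.
          star a (dot x (star y (dot a b))) =
            star (star a (dot x y)) (dot x (star y (dot (star a (dot x y)) b))) \<and>
          star y (dot (star a (dot x y)) b) =
            star (star y (dot a b)) (dot (star a (dot x (star y (dot a b)))) b)))"

text \<open>An L-module, L = Z[d^{+-1}, n^{+-1}, s^{+-1}], is the same as an abelian group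
together with three pairwise commuting additive automorphisms (the actions of d, n, s).\<close>
definition additive_aut :: "('a::ab_group_add \<Rightarrow> 'a) \<Rightarrow> bool" where
  "additive_aut f \<longleftrightarrow> bij f \<and> (\<forall>x y. f (x + y) = f x + f y)"

definition Laurent3_module :: "('a::ab_group_add \<Rightarrow> 'a) \<Rightarrow> ('a \<Rightarrow> 'a) \<Rightarrow> ('a \<Rightarrow> 'a) \<Rightarrow> bool" where
  "Laurent3_module D N S \<longleftrightarrow> additive_aut D \<and> additive_aut N \<and> additive_aut S \<and>
     D \<circ> N = N \<circ> D \<and> D \<circ> S = S \<circ> D \<and> N \<circ> S = S \<circ> N"

end

theory Submission
  imports Defs "HOL.Modules"
begin

text \<open>Both operations have the form (x, y) \<mapsto> A x + B y with A, B invertible, so they are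
  quasigroups: y is recovered from A x + B y by subtracting A x and applying the inverse of B,
  and symmetrically for x. Both sides of each biquasile axiom expand, by additivity, into
  Z-linear combinations of a, b, x, y whose coefficients are monomials in the commuting
  operators d, n, s; with the coefficient -dsn^2 of the first operation they agree term by term.\<close>

lemma additive_aut_imp_additive: "additive_aut f \<Longrightarrow> additive f"
  unfolding additive_aut_def additive_def by blast

lemma additive_aut_uminus: "additive_aut (uminus :: 'a::ab_group_add \<Rightarrow> 'a)"
  unfolding additive_aut_def using bij_uminus by simp

lemma additive_aut_comp:
  "additive_aut f \<Longrightarrow> additive_aut g \<Longrightarrow> additive_aut (f \<circ> g)"
  unfolding additive_aut_def by (simp add: bij_comp)

lemma linear_quasigroup_divisions:
  fixes A B :: "'a::ab_group_add \<Rightarrow> 'a"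
  assumes "additive_aut A" "additive_aut B"
  shows "\<exists>ldiv rdiv. \<forall>x y. ldiv y (A y + B x) = x \<and> rdiv (A x + B y) y = x"
proof -
  have "bij A" "bij B" using assms unfolding additive_aut_def by auto
  then have "inv B (A y + B x - A y) = x" "inv A (A x + B y - B y) = x" for x y
    by (simp_all add: bij_is_inj)
  then show ?thesis
    by (intro exI[of _ "\<lambda>y z. inv B (z - A y)"] exI[of _ "\<lambda>z y. inv A (z - B y)"]) simp
qed

lemma linear_biquasile_identities:
  fixes D N S :: "'a::ab_group_add \<Rightarrow> 'a"
  assumes "additive D" "additive N" "additive S"
    and "\<And>x. N (D x) = D (N x)" "\<And>x. S (D x) = D (S x)" "\<And>x. S (N x) = N (S x)"
  defines "star \<equiv> \<lambda>x y. - D (S (N (N x))) + N y"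
    and "dot \<equiv> \<lambda>x y. D x + S y"
  shows "star a (dot x (star y (dot a b))) =
           star (star a (dot x y)) (dot x (star y (dot (star a (dot x y)) b)))" (is ?first)
    and "star y (dot (star a (dot x y)) b) =
           star (star y (dot a b)) (dot (star a (dot x (star y (dot a b)))) b)" (is ?second)
proof -
  interpret D: additive D by fact
  interpret N: additive N by fact
  interpret S: additive S by fact
  show ?first and ?second
    by (simp_all add: star_def dot_def algebra_simps assms(4-6)
        D.add D.minus D.diff N.add N.minus N.diff S.add S.minus S.diff)
qed

theorem proposition4:
  fixes D N S :: "'x::ab_group_add \<Rightarrow> 'x"
  assumes "Laurent3_module D N S"
  shows "biquasile (\<lambda>x y. - D (S (N (N x))) + N y) (\<lambda>x y. D x + S y)"
proof -
  have D: "additive_aut D" and N: "additive_aut N" and S: "additive_aut S"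
    and "D \<circ> N = N \<circ> D" "D \<circ> S = S \<circ> D" "N \<circ> S = S \<circ> N"
    using assms unfolding Laurent3_module_def by auto
  then have commute: "N (D x) = D (N x)" "S (D x) = D (S x)" "S (N x) = N (S x)" for x
    by (simp_all add: fun_eq_iff)
  have "additive D" "additive N" "additive S"
    using D N S by (simp_all add: additive_aut_imp_additive)
  note identities = linear_biquasile_identities[OF this commute]
  have "additive_aut (uminus \<circ> D \<circ> S \<circ> N \<circ> N)"
    using D N S by (simp add: additive_aut_comp additive_aut_uminus)
  from linear_quasigroup_divisions[OF this N]
  obtain lstar rstar where "\<forall>x y. lstar y (- D (S (N (N y))) + N x) = x \<and>
                                    rstar (- D (S (N (N x))) + N y) y = x"
    by auto
  moreover obtain ldot rdot where "\<forall>x y. ldot y (D y + S x) = x \<and> rdot (D x + S y) y = x"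
    using linear_quasigroup_divisions[OF D S] by blast
  ultimately show ?thesis
    unfolding biquasile_def using identities by blast
qed

end
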